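(* Let $\Omega\subset\mathbb{R}^2$ be open, $\lambda>0$, and let $u\in L^2(\Omega)$ satisfy $-\Delta u=\lambda u$ in $\Omega$. Let $\mathbf{x}_0\in\Omega$, $h>0$, and let $\mathbf{e}^-,\mathbf{e}^+$ be unit vectors with angle $\alpha\pi$ from $\mathbf{e}^-$ to $\mathbf{e}^+$, where $\alpha\in(0,2)$ is irrational; put $\Gamma^\pm=\{\mathbf{x}_0+t\mathbf{e}^\pm:0\le t\le h\}\subset\Omega$. Suppose $\Gamma^-$ is a singular line of $u$ ($\partial_\nu u=0$ on $\Gamma^-$, $\nu$ a unit normal to $\Gamma^-$) and $\Gamma^+$ is a nodal line of $u$ ($u=0$ on $\Gamma^+$). Then $\mathrm{Vani}(u;\mathbf{x}_0)=+\infty$.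
   Context: No boundary condition is imposed on $\partial\Omega$; $u$ is real-analytic in $\Omega$. $\mathrm{Vani}(u;\mathbf{x}_0)$ is the smallest degree of a nonzero homogeneous term in the Taylor expansion of $u$ at $\mathbf{x}_0$ ($+\infty$ if all vanish). *)

theory Defs
  imports "HOL-Analysis.Analysis" "HOL-Library.Extended_Nat"
begin

definition pdx :: "(real \<times> real \<Rightarrow> real) \<Rightarrow> real \<times> real \<Rightarrow> real" where
  "pdx f p = deriv (\<lambda>s. f (s, snd p)) (fst p)"

definition pdy :: "(real \<times> real \<Rightarrow> real) \<Rightarrow> real \<times> real \<Rightarrow> real" where
  "pdy f p = deriv (\<lambda>s. f (fst p, s)) (snd p)"

definition pderiv2 :: "nat \<Rightarrow> nat \<Rightarrow> (real \<times> real \<Rightarrow> real) \<Rightarrow> real \<times> real \<Rightarrow> real" where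
  "pderiv2 a b f = (pdx ^^ a) ((pdy ^^ b) f)"

definition laplacian :: "(real \<times> real \<Rightarrow> real) \<Rightarrow> real \<times> real \<Rightarrow> real" where
  "laplacian f p = pdx (pdx f) p + pdy (pdy f) p"

text \<open>Real-analyticity on a set: locally a convergent (absolutely summable) double power series.\<close>
definition real_analytic_on2 :: "(real \<times> real \<Rightarrow> real) \<Rightarrow> (real \<times> real) set \<Rightarrow> bool" where
  "real_analytic_on2 f S \<longleftrightarrow> (\<forall>p\<in>S. \<exists>r>0. \<exists>c :: nat \<Rightarrow> nat \<Rightarrow> real.
      \<forall>q\<in>ball p r. ((\<lambda>(a,b). c a b * (fst q - fst p)^a * (snd q - snd p)^b) has_sum f q) UNIV)"

definition Vani :: "(real \<times> real \<Rightarrow> real) \<Rightarrow> real \<times> real \<Rightarrow> enat" where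
  "Vani f p = (if \<forall>a b. pderiv2 a b f p = 0 then \<infinity>
               else enat (LEAST n. \<exists>a b. a + b = n \<and> pderiv2 a b f p \<noteq> 0))"

definition rot :: "real \<Rightarrow> real \<times> real \<Rightarrow> real \<times> real" where
  "rot \<theta> v = (cos \<theta> * fst v - sin \<theta> * snd v, sin \<theta> * fst v + cos \<theta> * snd v)"

definition segment_from :: "real \<times> real \<Rightarrow> real \<times> real \<Rightarrow> real \<Rightarrow> (real \<times> real) set" where
  "segment_from x0 e h = {x0 + t *\<^sub>R e | t. 0 \<le> t \<and> t \<le> h}"

end

(*
  Near x0 the real-analytic function u is the sum of an absolutely convergent double power
  series  sum c(a,b) (x - x0)^a (y - y0)^b,  and the derivatives of u at x0 are a! b! c(a,b).
  The Helmholtz equation becomes the recurrence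
    (a+1)(a+2) c(a+2,b) + (b+1)(b+2) c(a,b+2) + lam c(a,b) = 0,
  so if all coefficients of degree < N vanish, the homogeneous part of degree N is harmonic
  and therefore equals Re (zeta (x + i y)^N) for some complex zeta.  Restricted to a ray, a
  series vanishes only if its lowest homogeneous part vanishes in that direction.  With
  e- = e^(i theta), the nodal line gives Re (zeta e^(i N (theta + alpha pi))) = 0 and the
  singular line gives Re (i zeta e^(i N theta)) = 0; since cos (N alpha pi) <> 0 for irrational
  alpha, zeta = 0.  By induction on N all Taylor coefficients vanish.
*)

theory Submission
  imports Defs
begin

section \<open>Absolutely convergent double power series\<close>

definition powser2 :: "(nat \<Rightarrow> nat \<Rightarrow> real) \<Rightarrow> real \<times> real \<Rightarrow> real \<times> real \<Rightarrow> real" where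
  "powser2 c p q = infsum (\<lambda>(a,b). c a b * (fst q - fst p)^a * (snd q - snd p)^b) UNIV"

definition sq_ball :: "real \<times> real \<Rightarrow> real \<Rightarrow> (real \<times> real) set" where
  "sq_ball p \<rho> = {q. \<bar>fst q - fst p\<bar> < \<rho> \<and> \<bar>snd q - snd p\<bar> < \<rho>}"

definition powser2_abs_conv :: "(nat \<Rightarrow> nat \<Rightarrow> real) \<Rightarrow> real \<Rightarrow> bool" where
  "powser2_abs_conv c \<rho> \<longleftrightarrow>
     (\<forall>r. 0 \<le> r \<and> r < \<rho> \<longrightarrow> (\<lambda>(a,b). \<bar>c a b\<bar> * r^a * r^b) summable_on UNIV)"

definition coeff_dx :: "(nat \<Rightarrow> nat \<Rightarrow> real) \<Rightarrow> nat \<Rightarrow> nat \<Rightarrow> real" where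
  "coeff_dx c a b = real (a+1) * c (a+1) b"

definition coeff_dy :: "(nat \<Rightarrow> nat \<Rightarrow> real) \<Rightarrow> nat \<Rightarrow> nat \<Rightarrow> real" where
  "coeff_dy c a b = real (b+1) * c a (b+1)"

lemma open_sq_ball: "open (sq_ball p \<rho>)"
  unfolding sq_ball_def by (intro open_Collect_conj open_Collect_less continuous_intros)

lemma center_in_sq_ball: "\<rho> > 0 \<Longrightarrow> p \<in> sq_ball p \<rho>"
  by (simp add: sq_ball_def)

lemma ray_in_sq_ball:
  assumes "norm v \<le> 1" "0 \<le> t" "t < \<rho>"
  shows "p + t *\<^sub>R v \<in> sq_ball p \<rho>"
proof -
  have "\<bar>fst v\<bar> \<le> 1" "\<bar>snd v\<bar> \<le> 1"
    using assms(1) norm_fst_le[of "fst v" "snd v"] norm_snd_le[of "snd v" "fst v"] by auto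
  then have "\<bar>t * fst v\<bar> \<le> t" "\<bar>t * snd v\<bar> \<le> t" using assms(2) by (auto simp: abs_mult intro: mult_left_le)
  then show ?thesis using assms(3) by (simp add: sq_ball_def)
qed

lemma sq_ball_subset_ball: "sq_ball p \<rho> \<subseteq> ball p (2 * \<rho>)"
proof
  fix q assume q: "q \<in> sq_ball p \<rho>"
  have "dist p q = sqrt ((fst q - fst p)^2 + (snd q - snd p)^2)"
    by (simp add: dist_prod_def dist_real_def power2_commute)
  also have "\<dots> \<le> \<bar>fst q - fst p\<bar> + \<bar>snd q - snd p\<bar>" by (rule sqrt_sum_squares_le_sum_abs)
  also have "\<dots> < 2 * \<rho>" using q by (simp add: sq_ball_def)
  finally show "q \<in> ball p (2 * \<rho>)" by simp
qed

lemma linear_times_power_bound: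
  fixes r s :: real
  assumes "0 \<le> r" "r < s"
  obtains C where "C \<ge> 0" "\<And>a. real a * r^(a-1) \<le> C * s^a"
proof -
  have s: "s > 0" using assms by linarith
  have q: "0 \<le> r/s" "r/s < 1" using assms s by auto
  then have "(\<lambda>n. of_nat n * (r/s)^n) \<longlonglongrightarrow> 0"
    by (intro powser_times_n_limit_0) simp
  then have "Bseq (\<lambda>n. of_nat n * (r/s)^n)" by (intro convergent_imp_Bseq convergentI)
  then obtain K where K: "K > 0" "\<And>n. \<bar>real n * (r/s)^n\<bar> \<le> K" by (auto elim: BseqE)
  show ?thesis
  proof (rule that[of "(K + 1) / s"])
    show "(K + 1) / s \<ge> 0" using K s by simp
    fix a :: nat
    show "real a * r^(a-1) \<le> (K + 1) / s * s^a"
    proof (cases a)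
      case 0 then show ?thesis using K s by simp
    next
      case (Suc m)
      have "(r/s)^m \<le> 1" using q by (simp add: power_le_one)
      then have "real a * (r/s)^m \<le> K + 1"
        using K(2)[of m] Suc by (simp add: algebra_simps abs_le_iff)
      then have "real a * (r/s)^m * s^m \<le> (K + 1) * s^m" using s by (simp add: mult_right_mono)
      then show ?thesis using Suc s by (simp add: power_divide)
    qed
  qed
qed

lemma weighted_dx_summable:
  assumes c: "powser2_abs_conv c \<rho>" and r: "0 \<le> r" "r < \<rho>"
  shows "(\<lambda>(a,b). real a * \<bar>c a b\<bar> * r^(a-1) * r^b) summable_on UNIV"
proof -
  define s where "s = (r + \<rho>) / 2"
  have s: "r < s" "s < \<rho>" using r by (auto simp: s_def)
  obtain C where C: "C \<ge> 0" "\<And>a. real a * r^(a-1) \<le> C * s^a"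
    using linear_times_power_bound r(1) s(1) by blast
  have "(\<lambda>(a,b). \<bar>c a b\<bar> * s^a * s^b) summable_on UNIV"
    using c r s unfolding powser2_abs_conv_def by auto
  then have "(\<lambda>x. C * (case x of (a,b) \<Rightarrow> \<bar>c a b\<bar> * s^a * s^b)) summable_on UNIV"
    by (rule summable_on_cmult_right)
  then show ?thesis
  proof (rule summable_on_comparison_test)
    fix x :: "nat \<times> nat"
    obtain a b where x: "x = (a,b)" by fastforce
    have "\<bar>c a b\<bar> * (real a * r^(a-1)) * r^b \<le> \<bar>c a b\<bar> * (C * s^a) * s^b"
      using C r s by (intro mult_mono[OF mult_left_mono[OF C(2)]] power_mono) auto
    then show "(case x of (a,b) \<Rightarrow> real a * \<bar>c a b\<bar> * r^(a-1) * r^b)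
               \<le> C * (case x of (a,b) \<Rightarrow> \<bar>c a b\<bar> * s^a * s^b)"
      by (simp add: x algebra_simps)
    show "0 \<le> (case x of (a,b) \<Rightarrow> real a * \<bar>c a b\<bar> * r^(a-1) * r^b)" using r by (simp add: x)
  qed
qed

lemma weighted_dy_summable:
  assumes c: "powser2_abs_conv c \<rho>" and r: "0 \<le> r" "r < \<rho>"
  shows "(\<lambda>(a,b). real b * \<bar>c a b\<bar> * r^a * r^(b-1)) summable_on UNIV"
proof -
  define s where "s = (r + \<rho>) / 2"
  have s: "r < s" "s < \<rho>" using r by (auto simp: s_def)
  obtain C where C: "C \<ge> 0" "\<And>b. real b * r^(b-1) \<le> C * s^b"
    using linear_times_power_bound r(1) s(1) by blast
  have "(\<lambda>(a,b). \<bar>c a b\<bar> * s^a * s^b) summable_on UNIV"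
    using c r s unfolding powser2_abs_conv_def by auto
  then have "(\<lambda>x. C * (case x of (a,b) \<Rightarrow> \<bar>c a b\<bar> * s^a * s^b)) summable_on UNIV"
    by (rule summable_on_cmult_right)
  then show ?thesis
  proof (rule summable_on_comparison_test)
    fix x :: "nat \<times> nat"
    obtain a b where x: "x = (a,b)" by fastforce
    have "\<bar>c a b\<bar> * (real b * r^(b-1)) * r^a \<le> \<bar>c a b\<bar> * (C * s^b) * s^a"
      using C r s by (intro mult_mono[OF mult_left_mono[OF C(2)]] power_mono) auto
    then show "(case x of (a,b) \<Rightarrow> real b * \<bar>c a b\<bar> * r^a * r^(b-1))
               \<le> C * (case x of (a,b) \<Rightarrow> \<bar>c a b\<bar> * s^a * s^b)"
      by (simp add: x algebra_simps)
    show "0 \<le> (case x of (a,b) \<Rightarrow> real b * \<bar>c a b\<bar> * r^a * r^(b-1))" using r by (simp add: x)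
  qed
qed

lemma has_sum_shift_fst_iff:
  fixes g :: "nat \<times> nat \<Rightarrow> 'a::topological_comm_monoid_add"
  assumes "\<And>b. g (0, b) = 0"
  shows "((\<lambda>(a,b). g (Suc a, b)) has_sum s) UNIV \<longleftrightarrow> (g has_sum s) UNIV"
proof -
  have inj: "inj (\<lambda>(a::nat, b::nat). (Suc a, b))" by (auto simp: inj_def)
  have "(g has_sum s) (range (\<lambda>(a, b). (Suc a, b))) \<longleftrightarrow> (g has_sum s) UNIV"
  proof (rule has_sum_cong_neutral)
    fix x :: "nat \<times> nat" assume x: "x \<in> UNIV - range (\<lambda>(a, b). (Suc a, b))"
    obtain a b where ab: "x = (a, b)" by fastforce
    show "g x = 0"
    proof (cases a)
      case (Suc m) then show ?thesis using x ab by (auto intro: image_eqI[of _ _ "(m, b)"])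
    qed (use assms ab in simp)
  qed auto
  then show ?thesis using has_sum_reindex[OF inj, of g s] by (simp add: comp_def case_prod_unfold)
qed

lemma has_sum_shift_snd_iff:
  fixes g :: "nat \<times> nat \<Rightarrow> 'a::topological_comm_monoid_add"
  assumes "\<And>a. g (a, 0) = 0"
  shows "((\<lambda>(a,b). g (a, Suc b)) has_sum s) UNIV \<longleftrightarrow> (g has_sum s) UNIV"
proof -
  have inj: "inj (\<lambda>(a::nat, b::nat). (a, Suc b))" by (auto simp: inj_def)
  have "(g has_sum s) (range (\<lambda>(a, b). (a, Suc b))) \<longleftrightarrow> (g has_sum s) UNIV"
  proof (rule has_sum_cong_neutral)
    fix x :: "nat \<times> nat" assume x: "x \<in> UNIV - range (\<lambda>(a, b). (a, Suc b))"
    obtain a b where ab: "x = (a, b)" by fastforce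
    show "g x = 0"
    proof (cases b)
      case (Suc m) then show ?thesis using x ab by (auto intro: image_eqI[of _ _ "(a, m)"])
    qed (use assms ab in simp)
  qed auto
  then show ?thesis using has_sum_reindex[OF inj, of g s] by (simp add: comp_def case_prod_unfold)
qed

lemma powser2_abs_conv_coeff_dx:
  assumes "powser2_abs_conv c \<rho>"
  shows "powser2_abs_conv (coeff_dx c) \<rho>"
  unfolding powser2_abs_conv_def
proof (intro allI impI)
  fix r :: real assume r: "0 \<le> r \<and> r < \<rho>"
  have "(\<lambda>(a,b). real a * \<bar>c a b\<bar> * r^(a-1) * r^b) summable_on UNIV"
    using weighted_dx_summable assms r by blast
  then have "(\<lambda>(a,b). real (Suc a) * \<bar>c (Suc a) b\<bar> * r^a * r^b) summable_on UNIV"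
    using has_sum_shift_fst_iff[of "\<lambda>(a,b). real a * \<bar>c a b\<bar> * r^(a-1) * r^b"]
    by (simp add: summable_on_def)
  then show "(\<lambda>(a,b). \<bar>coeff_dx c a b\<bar> * r^a * r^b) summable_on UNIV"
    by (simp add: coeff_dx_def abs_mult)
qed

lemma powser2_abs_conv_coeff_dy:
  assumes "powser2_abs_conv c \<rho>"
  shows "powser2_abs_conv (coeff_dy c) \<rho>"
  unfolding powser2_abs_conv_def
proof (intro allI impI)
  fix r :: real assume r: "0 \<le> r \<and> r < \<rho>"
  have "(\<lambda>(a,b). real b * \<bar>c a b\<bar> * r^a * r^(b-1)) summable_on UNIV"
    using weighted_dy_summable assms r by blast
  then have "(\<lambda>(a,b). real (Suc b) * \<bar>c a (Suc b)\<bar> * r^a * r^b) summable_on UNIV"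
    using has_sum_shift_snd_iff[of "\<lambda>(a,b). real b * \<bar>c a b\<bar> * r^a * r^(b-1)"]
    by (simp add: summable_on_def)
  then show "(\<lambda>(a,b). \<bar>coeff_dy c a b\<bar> * r^a * r^b) summable_on UNIV"
    by (simp add: coeff_dy_def abs_mult)
qed

lemma powser2_abs_conv_add:
  assumes "powser2_abs_conv c \<rho>" "powser2_abs_conv d \<rho>"
  shows "powser2_abs_conv (\<lambda>a b. c a b + d a b) \<rho>"
  unfolding powser2_abs_conv_def
proof (intro allI impI)
  fix r :: real assume r: "0 \<le> r \<and> r < \<rho>"
  have "(\<lambda>x. (case x of (a,b) \<Rightarrow> \<bar>c a b\<bar> * r^a * r^b) + (case x of (a,b) \<Rightarrow> \<bar>d a b\<bar> * r^a * r^b))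
          summable_on UNIV"
    using assms r unfolding powser2_abs_conv_def by (intro summable_on_add) auto
  then show "(\<lambda>(a,b). \<bar>c a b + d a b\<bar> * r^a * r^b) summable_on UNIV"
  proof (rule summable_on_comparison_test)
    fix x :: "nat \<times> nat"
    obtain a b where x: "x = (a,b)" by fastforce
    have "\<bar>c a b + d a b\<bar> * (r^a * r^b) \<le> (\<bar>c a b\<bar> + \<bar>d a b\<bar>) * (r^a * r^b)"
      using r by (intro mult_right_mono abs_triangle_ineq) auto
    then show "(case x of (a,b) \<Rightarrow> \<bar>c a b + d a b\<bar> * r^a * r^b)
        \<le> (case x of (a,b) \<Rightarrow> \<bar>c a b\<bar> * r^a * r^b) + (case x of (a,b) \<Rightarrow> \<bar>d a b\<bar> * r^a * r^b)"
      by (simp add: x algebra_simps)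
  qed (use r in auto)
qed

lemma powser2_abs_conv_cmult:
  assumes "powser2_abs_conv c \<rho>"
  shows "powser2_abs_conv (\<lambda>a b. k * c a b) \<rho>"
  unfolding powser2_abs_conv_def
proof (intro allI impI)
  fix r :: real assume r: "0 \<le> r \<and> r < \<rho>"
  have "(\<lambda>x. \<bar>k\<bar> * (case x of (a,b) \<Rightarrow> \<bar>c a b\<bar> * r^a * r^b)) summable_on UNIV"
    using assms r unfolding powser2_abs_conv_def by (intro summable_on_cmult_right) auto
  then show "(\<lambda>(a,b). \<bar>k * c a b\<bar> * r^a * r^b) summable_on UNIV"
    by (simp add: case_prod_unfold abs_mult mult.assoc)
qed

lemma powser2_summable_at:
  assumes c: "powser2_abs_conv c \<rho>" and "\<bar>x\<bar> \<le> r" "\<bar>y\<bar> \<le> r" "r < \<rho>"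
  shows "(\<lambda>(a,b). c a b * x^a * y^b) summable_on UNIV"
proof (rule abs_summable_summable)
  have "(\<lambda>(a,b). \<bar>c a b\<bar> * r^a * r^b) summable_on UNIV"
    using assms unfolding powser2_abs_conv_def by auto
  then show "(\<lambda>z. norm (case z of (a,b) \<Rightarrow> c a b * x^a * y^b)) summable_on UNIV"
  proof (rule summable_on_comparison_test)
    fix z :: "nat \<times> nat"
    obtain a b where z: "z = (a,b)" by fastforce
    have "\<bar>x\<bar>^a * \<bar>y\<bar>^b \<le> r^a * r^b" using assms by (intro mult_mono power_mono) auto
    then have "\<bar>c a b\<bar> * (\<bar>x\<bar>^a * \<bar>y\<bar>^b) \<le> \<bar>c a b\<bar> * (r^a * r^b)" by (rule mult_left_mono) simp
    then show "norm (case z of (a,b) \<Rightarrow> c a b * x^a * y^b) \<le> (case z of (a,b) \<Rightarrow> \<bar>c a b\<bar> * r^a * r^b)"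
      by (simp add: z abs_mult power_abs mult.assoc)
  qed simp
qed

lemma powser2_has_sum:
  assumes c: "powser2_abs_conv c \<rho>" and q: "q \<in> sq_ball p \<rho>"
  shows "((\<lambda>(a,b). c a b * (fst q - fst p)^a * (snd q - snd p)^b) has_sum powser2 c p q) UNIV"
proof -
  have "(\<lambda>(a,b). c a b * (fst q - fst p)^a * (snd q - snd p)^b) summable_on UNIV"
    using q by (intro powser2_summable_at[OF c, of _ "max \<bar>fst q - fst p\<bar> \<bar>snd q - snd p\<bar>"])
      (auto simp: sq_ball_def)
  then show ?thesis unfolding powser2_def by (rule has_sum_infsum)
qed

lemma powser2_add:
  assumes "powser2_abs_conv c \<rho>" "powser2_abs_conv d \<rho>" "q \<in> sq_ball p \<rho>"
  shows "powser2 (\<lambda>a b. c a b + d a b) p q = powser2 c p q + powser2 d p q"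
proof -
  have "((\<lambda>z. (case z of (a,b) \<Rightarrow> c a b * (fst q - fst p)^a * (snd q - snd p)^b)
       + (case z of (a,b) \<Rightarrow> d a b * (fst q - fst p)^a * (snd q - snd p)^b))
       has_sum powser2 c p q + powser2 d p q) UNIV"
    using assms by (intro has_sum_add powser2_has_sum)
  then show ?thesis unfolding powser2_def[of "\<lambda>a b. c a b + d a b"]
    by (intro infsumI) (simp add: case_prod_unfold algebra_simps)
qed

lemma powser2_cmult: "powser2 (\<lambda>a b. k * c a b) p q = k * powser2 c p q"
  unfolding powser2_def
  by (subst infsum_cmult_right'[symmetric]) (simp add: case_prod_unfold mult.assoc)

lemma powser2_coeff_dx_has_sum:
  assumes c: "powser2_abs_conv c \<rho>" and q: "q \<in> sq_ball p \<rho>"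
  shows "((\<lambda>(a,b). real a * c a b * (fst q - fst p)^(a-1) * (snd q - snd p)^b)
           has_sum powser2 (coeff_dx c) p q) UNIV"
  using powser2_has_sum[OF powser2_abs_conv_coeff_dx[OF c] q]
    has_sum_shift_fst_iff[of "\<lambda>(a,b). real a * c a b * (fst q - fst p)^(a-1) * (snd q - snd p)^b"]
  by (simp add: coeff_dx_def)

lemma powser2_coeff_dy_has_sum:
  assumes c: "powser2_abs_conv c \<rho>" and q: "q \<in> sq_ball p \<rho>"
  shows "((\<lambda>(a,b). real b * c a b * (fst q - fst p)^a * (snd q - snd p)^(b-1))
           has_sum powser2 (coeff_dy c) p q) UNIV"
  using powser2_has_sum[OF powser2_abs_conv_coeff_dy[OF c] q]
    has_sum_shift_snd_iff[of "\<lambda>(a,b). real b * c a b * (fst q - fst p)^a * (snd q - snd p)^(b-1)"]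
  by (simp add: coeff_dy_def)

lemma sq_ball_line_nbhd:
  assumes q: "q \<in> sq_ball p \<rho>"
  obtains r \<epsilon> where "0 \<le> r" "r < \<rho>" "\<epsilon> > 0" "\<And>s. \<bar>s\<bar> < \<epsilon> \<Longrightarrow> q + s *\<^sub>R n \<in> sq_ball p r"
proof -
  define r where "r = (max \<bar>fst q - fst p\<bar> \<bar>snd q - snd p\<bar> + \<rho>) / 2"
  have r: "0 \<le> r" "r < \<rho>" "q \<in> sq_ball p r" using q by (auto simp: r_def sq_ball_def max_def)
  have "open ((\<lambda>s. q + s *\<^sub>R n) -` sq_ball p r)"
    by (intro continuous_open_vimage open_sq_ball continuous_intros)
  moreover have "0 \<in> (\<lambda>s. q + s *\<^sub>R n) -` sq_ball p r" using r by simp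
  ultimately obtain \<epsilon> where "\<epsilon> > 0" "ball 0 \<epsilon> \<subseteq> (\<lambda>s. q + s *\<^sub>R n) -` sq_ball p r"
    by (meson openE)
  with r show ?thesis by (intro that[of r \<epsilon>]) (auto simp: dist_real_def)
qed

lemma has_sum_prod_decode_sums:
  fixes g :: "nat \<times> nat \<Rightarrow> real"
  assumes "(g has_sum s) UNIV"
  shows "(\<lambda>k. g (prod_decode k)) sums s"
proof -
  have "bij_betw prod_decode UNIV UNIV" using bij_prod_decode by (simp add: bij_betw_def bij_def)
  then have "((\<lambda>k. g (prod_decode k)) has_sum s) UNIV" using assms by (simp add: has_sum_reindex_bij_betw)
  then show ?thesis by (rule has_sum_imp_sums)
qed

lemma has_sum_has_real_derivative_termwise:
  fixes f f' :: "nat \<times> nat \<Rightarrow> real \<Rightarrow> real" and M :: "nat \<times> nat \<Rightarrow> real"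
  assumes "\<epsilon> > 0"
    and deriv: "\<And>i s. (f i has_real_derivative f' i s) (at s)"
    and M: "M summable_on UNIV" and bound: "\<And>i s. \<bar>s\<bar> < \<epsilon> \<Longrightarrow> \<bar>f' i s\<bar> \<le> M i"
    and F: "\<And>s. \<bar>s\<bar> < \<epsilon> \<Longrightarrow> ((\<lambda>i. f i s) has_sum F s) UNIV"
    and F': "((\<lambda>i. f' i 0) has_sum F') UNIV"
  shows "(F has_real_derivative F') (at 0)"
proof -
  define e where "e = prod_decode"
  have "bij_betw e UNIV UNIV" using bij_prod_decode by (simp add: e_def bij_betw_def bij_def)
  then have "(\<lambda>k. M (e k)) summable_on UNIV" using M by (simp add: summable_on_reindex_bij_betw)
  moreover have M_nonneg: "0 \<le> M i" for i using bound[of 0 i] \<open>\<epsilon> > 0\<close> by linarith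
  ultimately have "summable (\<lambda>k. M (e k))" by (simp add: summable_on_UNIV_nonneg_real_iff)
  then have unif: "uniformly_convergent_on (ball 0 \<epsilon>) (\<lambda>n s. \<Sum>k<n. f' (e k) s)"
    by (rule Weierstrass_m_test'[rotated]) (use bound in \<open>auto simp: dist_real_def\<close>)
  have sums: "(\<lambda>k. f (e k) s) sums F s" if "s \<in> ball 0 \<epsilon>" for s
    using that has_sum_prod_decode_sums[OF F[of s]] by (simp add: e_def)
  have summable0: "summable (\<lambda>k. f (e k) 0)" using sums[of 0] \<open>\<epsilon> > 0\<close> by (auto simp: sums_iff)
  have deriv_within: "(f (e k) has_real_derivative f' (e k) s) (at s within ball 0 \<epsilon>)" for k s
    using deriv by (rule has_field_derivative_at_within)
  from has_field_derivative_series'(2)[OF convex_ball deriv_within unif _ summable0, of 0] \<open>\<epsilon> > 0\<close>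
  have D: "((\<lambda>s. \<Sum>k. f (e k) s) has_real_derivative (\<Sum>k. f' (e k) 0)) (at 0)" by simp
  have "(\<Sum>k. f' (e k) 0) = F'" using has_sum_prod_decode_sums[OF F'] by (simp add: e_def sums_iff)
  with has_field_derivative_transform_within_open[OF D open_ball[of 0 \<epsilon>], where g = F] sums \<open>\<epsilon> > 0\<close>
  show ?thesis by (simp add: sums_iff)
qed

lemma line_term_derivative_bound:
  fixes x y r n1 n2 k :: real
  assumes x: "\<bar>x\<bar> \<le> r" and y: "\<bar>y\<bar> \<le> r"
  shows "\<bar>k * (real a * x^(a-1) * n1 * y^b + x^a * (real b * y^(b-1) * n2))\<bar>
     \<le> \<bar>n1\<bar> * (real a * \<bar>k\<bar> * r^(a-1) * r^b) + \<bar>n2\<bar> * (real b * \<bar>k\<bar> * r^a * r^(b-1))"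
proof -
  have "\<bar>x\<bar>^(a-1) * \<bar>y\<bar>^b \<le> r^(a-1) * r^b" "\<bar>x\<bar>^a * \<bar>y\<bar>^(b-1) \<le> r^a * r^(b-1)"
    using x y by (intro mult_mono power_mono; simp)+
  then have "\<bar>n1\<bar> * (real a * \<bar>k\<bar>) * (\<bar>x\<bar>^(a-1) * \<bar>y\<bar>^b) + \<bar>n2\<bar> * (real b * \<bar>k\<bar>) * (\<bar>x\<bar>^a * \<bar>y\<bar>^(b-1))
      \<le> \<bar>n1\<bar> * (real a * \<bar>k\<bar>) * (r^(a-1) * r^b) + \<bar>n2\<bar> * (real b * \<bar>k\<bar>) * (r^a * r^(b-1))"
    by (intro add_mono mult_left_mono) auto
  moreover have "\<bar>k * (real a * x^(a-1) * n1 * y^b + x^a * (real b * y^(b-1) * n2))\<bar>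
      \<le> \<bar>n1\<bar> * (real a * \<bar>k\<bar>) * (\<bar>x\<bar>^(a-1) * \<bar>y\<bar>^b) + \<bar>n2\<bar> * (real b * \<bar>k\<bar>) * (\<bar>x\<bar>^a * \<bar>y\<bar>^(b-1))"
    using abs_triangle_ineq[of "k * (real a * x^(a-1) * n1 * y^b)" "k * (x^a * (real b * y^(b-1) * n2))"]
    by (simp add: abs_mult power_abs distrib_left mult_ac)
  ultimately show ?thesis by (simp add: mult_ac)
qed

lemma powser2_has_derivative_line:
  assumes c: "powser2_abs_conv c \<rho>" and q: "q \<in> sq_ball p \<rho>"
  shows "((\<lambda>s. powser2 c p (q + s *\<^sub>R n)) has_real_derivative
           fst n * powser2 (coeff_dx c) p q + snd n * powser2 (coeff_dy c) p q) (at 0)"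
proof -
  obtain r \<epsilon> where r: "0 \<le> r" "r < \<rho>" and "\<epsilon> > 0"
    and line: "\<And>s. \<bar>s\<bar> < \<epsilon> \<Longrightarrow> q + s *\<^sub>R n \<in> sq_ball p r"
    using sq_ball_line_nbhd[OF q] by blast
  define x where "x = fst q - fst p"
  define y where "y = snd q - snd p"
  have line': "\<bar>x + s * fst n\<bar> < r" "\<bar>y + s * snd n\<bar> < r" if "\<bar>s\<bar> < \<epsilon>" for s
    using line[OF that] by (auto simp: sq_ball_def x_def y_def algebra_simps)
  define f where "f = (\<lambda>(a,b) s. c a b * (x + s * fst n)^a * (y + s * snd n)^b)"
  define f' where "f' = (\<lambda>(a,b) s. c a b * (real a * (x + s * fst n)^(a-1) * fst n * (y + s * snd n)^b
                                      + (x + s * fst n)^a * (real b * (y + s * snd n)^(b-1) * snd n)))"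
  define M where "M = (\<lambda>(a,b). \<bar>fst n\<bar> * (real a * \<bar>c a b\<bar> * r^(a-1) * r^b)
                               + \<bar>snd n\<bar> * (real b * \<bar>c a b\<bar> * r^a * r^(b-1)))"
  show ?thesis
  proof (rule has_sum_has_real_derivative_termwise[OF \<open>\<epsilon> > 0\<close>, where f = f and f' = f' and M = M])
    show "(f i has_real_derivative f' i s) (at s)" for i s
      by (cases i) (auto simp: f_def f'_def intro!: derivative_eq_intros simp: algebra_simps)
    show "M summable_on UNIV"
      unfolding M_def case_prod_unfold
      using weighted_dx_summable[OF c r] weighted_dy_summable[OF c r]
      by (intro summable_on_add summable_on_cmult_right) (simp_all add: case_prod_unfold)
    show "\<bar>f' i s\<bar> \<le> M i" if "\<bar>s\<bar> < \<epsilon>" for i s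
    proof -
      obtain a b where "i = (a,b)" by fastforce
      with line_term_derivative_bound[OF line'(1,2)[OF that, THEN less_imp_le]] show ?thesis
        by (simp add: f'_def M_def)
    qed
    show "((\<lambda>i. f i s) has_sum powser2 c p (q + s *\<^sub>R n)) UNIV" if "\<bar>s\<bar> < \<epsilon>" for s
    proof -
      have "q + s *\<^sub>R n \<in> sq_ball p \<rho>" using line[OF that] r by (auto simp: sq_ball_def)
      from powser2_has_sum[OF c this] show ?thesis
        by (simp add: f_def x_def y_def case_prod_unfold algebra_simps)
    qed
    have "((\<lambda>i. fst n * (case i of (a,b) \<Rightarrow> real a * c a b * x^(a-1) * y^b)
              + snd n * (case i of (a,b) \<Rightarrow> real b * c a b * x^a * y^(b-1)))
          has_sum fst n * powser2 (coeff_dx c) p q + snd n * powser2 (coeff_dy c) p q) UNIV"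
      using powser2_coeff_dx_has_sum[OF c q] powser2_coeff_dy_has_sum[OF c q]
      by (intro has_sum_add has_sum_cmult_right) (simp_all add: x_def y_def)
    then show "((\<lambda>i. f' i 0) has_sum fst n * powser2 (coeff_dx c) p q + snd n * powser2 (coeff_dy c) p q) UNIV"
      by (simp add: f'_def case_prod_unfold algebra_simps)
  qed
qed

section \<open>Partial derivatives and Taylor coefficients\<close>

lemma pdx_eq_deriv_line: "pdx f q = deriv (\<lambda>s. f (q + s *\<^sub>R (1, 0))) 0"
  unfolding pdx_def by (subst deriv_shift_0) (cases q, simp add: comp_def add.commute)

lemma pdy_eq_deriv_line: "pdy f q = deriv (\<lambda>s. f (q + s *\<^sub>R (0, 1))) 0"
  unfolding pdy_def by (subst deriv_shift_0) (cases q, simp add: comp_def add.commute)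

lemma deriv_line_cong_open:
  fixes q v :: "'a::real_normed_vector"
  assumes "open S" "\<forall>z\<in>S. f z = g z" "q \<in> S"
  shows "deriv (\<lambda>s. f (q + s *\<^sub>R v)) 0 = deriv (\<lambda>s. g (q + s *\<^sub>R v)) 0"
proof (rule deriv_cong_ev)
  have "open ((\<lambda>s. q + s *\<^sub>R v) -` S)"
    using assms(1) by (intro continuous_open_vimage continuous_intros)
  then have "\<forall>\<^sub>F s in nhds 0. s \<in> (\<lambda>s. q + s *\<^sub>R v) -` S"
    using assms(3) by (intro eventually_nhds_in_open) auto
  then show "\<forall>\<^sub>F s in nhds 0. f (q + s *\<^sub>R v) = g (q + s *\<^sub>R v)"
    by eventually_elim (use assms(2) in auto)
qed simp

lemma funpow_cong_open:
  fixes D :: "('a \<Rightarrow> 'b) \<Rightarrow> 'a \<Rightarrow> 'b"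
  assumes D: "\<And>h k q. \<forall>z\<in>S. h z = k z \<Longrightarrow> q \<in> S \<Longrightarrow> D h q = D k q"
    and "\<forall>z\<in>S. f z = g z"
  shows "\<forall>z\<in>S. (D^^n) f z = (D^^n) g z"
proof (induction n)
  case (Suc n)
  then show ?case using D[of "(D^^n) f" "(D^^n) g"] by simp
qed (use assms(2) in simp)

lemma pdx_cong_open: "open S \<Longrightarrow> \<forall>z\<in>S. f z = g z \<Longrightarrow> q \<in> S \<Longrightarrow> pdx f q = pdx g q"
  unfolding pdx_eq_deriv_line by (rule deriv_line_cong_open)

lemma pdy_cong_open: "open S \<Longrightarrow> \<forall>z\<in>S. f z = g z \<Longrightarrow> q \<in> S \<Longrightarrow> pdy f q = pdy g q"
  unfolding pdy_eq_deriv_line by (rule deriv_line_cong_open)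

lemma pderiv2_cong_open:
  assumes "open S" "\<forall>z\<in>S. f z = g z" "q \<in> S"
  shows "pderiv2 a b f q = pderiv2 a b g q"
proof -
  have "\<forall>z\<in>S. (pdy^^b) f z = (pdy^^b) g z"
    by (rule funpow_cong_open[OF pdy_cong_open[OF assms(1)] assms(2)])
  from funpow_cong_open[where D = pdx and n = a, OF pdx_cong_open[OF assms(1)] this] assms(3)
  show ?thesis by (simp add: pderiv2_def)
qed

lemma pdx_powser2:
  assumes "powser2_abs_conv c \<rho>" "q \<in> sq_ball p \<rho>"
  shows "pdx (powser2 c p) q = powser2 (coeff_dx c) p q"
  unfolding pdx_eq_deriv_line using powser2_has_derivative_line[OF assms, of "(1, 0)"]
  by (simp add: DERIV_imp_deriv)

lemma pdy_powser2:
  assumes "powser2_abs_conv c \<rho>" "q \<in> sq_ball p \<rho>"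
  shows "pdy (powser2 c p) q = powser2 (coeff_dy c) p q"
  unfolding pdy_eq_deriv_line using powser2_has_derivative_line[OF assms, of "(0, 1)"]
  by (simp add: DERIV_imp_deriv)

lemma funpow_powser2:
  assumes D_cong: "\<And>h k q. \<forall>z\<in>sq_ball p \<rho>. h z = k z \<Longrightarrow> q \<in> sq_ball p \<rho> \<Longrightarrow> D h q = D k q"
    and D_powser2: "\<And>c q. powser2_abs_conv c \<rho> \<Longrightarrow> q \<in> sq_ball p \<rho> \<Longrightarrow>
                           D (powser2 c p) q = powser2 (E c) p q"
    and E_conv: "\<And>c. powser2_abs_conv c \<rho> \<Longrightarrow> powser2_abs_conv (E c) \<rho>"
    and c: "powser2_abs_conv c \<rho>"
  shows "\<forall>q\<in>sq_ball p \<rho>. (D^^n) (powser2 c p) q = powser2 ((E^^n) c) p q"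
proof (induction n)
  case (Suc n)
  have conv: "powser2_abs_conv ((E^^n) c) \<rho>" by (induction n) (use E_conv c in auto)
  show ?case
  proof
    fix q assume q: "q \<in> sq_ball p \<rho>"
    have "(D^^Suc n) (powser2 c p) q = D (powser2 ((E^^n) c) p) q"
      using D_cong[OF Suc q] by simp
    also have "\<dots> = powser2 ((E^^Suc n) c) p q" using D_powser2[OF conv q] by simp
    finally show "(D^^Suc n) (powser2 c p) q = powser2 ((E^^Suc n) c) p q" .
  qed
qed simp

lemma coeff_dx_funpow: "(coeff_dx^^a) c i j = fact (i + a) / fact i * c (i + a) j"
proof (induction a arbitrary: i)
  case (Suc a)
  have "(coeff_dx^^Suc a) c i j = real (i + 1) * (coeff_dx^^a) c (i + 1) j" by (simp add: coeff_dx_def)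
  also have "\<dots> = real (i + 1) * (fact (i + 1 + a) / fact (i + 1) * c (i + 1 + a) j)" using Suc by simp
  also have "\<dots> = fact (i + Suc a) / fact i * c (i + Suc a) j"
    by (simp add: field_simps fact_Suc del: of_nat_Suc)
  finally show ?case .
qed simp

lemma coeff_dy_funpow: "(coeff_dy^^b) c i j = fact (j + b) / fact j * c i (j + b)"
proof (induction b arbitrary: j)
  case (Suc b)
  have "(coeff_dy^^Suc b) c i j = real (j + 1) * (coeff_dy^^b) c i (j + 1)" by (simp add: coeff_dy_def)
  also have "\<dots> = real (j + 1) * (fact (j + 1 + b) / fact (j + 1) * c i (j + 1 + b))" using Suc by simp
  also have "\<dots> = fact (j + Suc b) / fact j * c i (j + Suc b)"
    by (simp add: field_simps fact_Suc del: of_nat_Suc)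
  finally show ?case .
qed simp

lemma powser2_center: "powser2 c p p = c 0 0"
proof -
  have "powser2 c p p = infsum (\<lambda>(a,b). c a b * 0^a * (0::real)^b) {(0,0)}"
    unfolding powser2_def by (intro infsum_cong_neutral) auto
  then show ?thesis by simp
qed

lemma pderiv2_powser2_center:
  assumes c: "powser2_abs_conv c \<rho>" and "\<rho> > 0"
  shows "pderiv2 a b (powser2 c p) p = fact a * fact b * c a b"
proof -
  have p: "p \<in> sq_ball p \<rho>" using \<open>\<rho> > 0\<close> by (rule center_in_sq_ball)
  have conv_dy: "powser2_abs_conv ((coeff_dy^^b) c) \<rho>"
    by (induction b) (use c powser2_abs_conv_coeff_dy in auto)
  have "\<forall>q\<in>sq_ball p \<rho>. (pdy^^b) (powser2 c p) q = powser2 ((coeff_dy^^b) c) p q"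
    by (rule funpow_powser2[where D = pdy and E = coeff_dy, OF pdy_cong_open[OF open_sq_ball] pdy_powser2 powser2_abs_conv_coeff_dy c])
  from funpow_cong_open[OF pdx_cong_open[OF open_sq_ball] this] p
  have "pderiv2 a b (powser2 c p) p = (pdx^^a) (powser2 ((coeff_dy^^b) c) p) p"
    by (simp add: pderiv2_def)
  also have "\<dots> = powser2 ((coeff_dx^^a) ((coeff_dy^^b) c)) p p"
    using funpow_powser2[where D = pdx and E = coeff_dx, OF pdx_cong_open[OF open_sq_ball] pdx_powser2 powser2_abs_conv_coeff_dx conv_dy] p
    by simp
  also have "\<dots> = fact a * fact b * c a b"
    by (simp add: powser2_center coeff_dx_funpow coeff_dy_funpow)
  finally show ?thesis .
qed

lemma powser2_coeffs_unique:
  assumes "\<rho> > 0" "powser2_abs_conv c \<rho>" "powser2_abs_conv d \<rho>"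
    and "\<forall>q\<in>sq_ball p \<rho>. powser2 c p q = powser2 d p q"
  shows "c a b = d a b"
proof -
  have "pderiv2 a b (powser2 c p) p = pderiv2 a b (powser2 d p) p"
    using open_sq_ball assms(4) center_in_sq_ball[OF assms(1)] by (rule pderiv2_cong_open)
  then show ?thesis using pderiv2_powser2_center[OF assms(2,1)] pderiv2_powser2_center[OF assms(3,1)] by simp
qed

lemma Vani_powser2_zero:
  assumes "\<rho> > 0" "powser2_abs_conv c \<rho>" "\<forall>q\<in>sq_ball p \<rho>. u q = powser2 c p q" "\<forall>a b. c a b = 0"
  shows "Vani u p = \<infinity>"
proof -
  have "pderiv2 a b u p = 0" for a b
    using pderiv2_cong_open[OF open_sq_ball assms(3) center_in_sq_ball[OF assms(1)]]
      pderiv2_powser2_center[OF assms(2,1)] assms(4) by simp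
  then show ?thesis by (simp add: Vani_def)
qed

section \<open>Local expansion of solutions of the Helmholtz equation\<close>

lemma real_analytic_on2_local_powser2:
  assumes an: "real_analytic_on2 u \<Omega>" and "open \<Omega>" "p \<in> \<Omega>"
  obtains \<rho> c where "\<rho> > 0" "powser2_abs_conv c \<rho>" "sq_ball p \<rho> \<subseteq> \<Omega>"
    "\<forall>q\<in>sq_ball p \<rho>. u q = powser2 c p q"
proof -
  obtain r c where "r > 0" and hs: "\<forall>q\<in>ball p r.
      ((\<lambda>(a,b). c a b * (fst q - fst p)^a * (snd q - snd p)^b) has_sum u q) UNIV"
    using an \<open>p \<in> \<Omega>\<close> unfolding real_analytic_on2_def by blast
  obtain \<epsilon> where "\<epsilon> > 0" "ball p \<epsilon> \<subseteq> \<Omega>" using \<open>open \<Omega>\<close> \<open>p \<in> \<Omega>\<close> open_contains_ball by blast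
  define \<rho> where "\<rho> = min r \<epsilon> / 2"
  have "\<rho> > 0" using \<open>r > 0\<close> \<open>\<epsilon> > 0\<close> by (simp add: \<rho>_def)
  have sub: "sq_ball p \<rho> \<subseteq> ball p r \<inter> ball p \<epsilon>"
    using sq_ball_subset_ball[of p \<rho>] by (auto simp: \<rho>_def)
  show ?thesis
  proof (rule that[OF \<open>\<rho> > 0\<close>])
    show "sq_ball p \<rho> \<subseteq> \<Omega>" using sub \<open>ball p \<epsilon> \<subseteq> \<Omega>\<close> by blast
    show "\<forall>q\<in>sq_ball p \<rho>. u q = powser2 c p q"
      using sub hs unfolding powser2_def by (auto intro!: infsumI[symmetric])
    show "powser2_abs_conv c \<rho>" unfolding powser2_abs_conv_def
    proof (intro allI impI)
      fix t :: real assume t: "0 \<le> t \<and> t < \<rho>"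
      have "(fst p + t, snd p + t) \<in> sq_ball p \<rho>" using t by (simp add: sq_ball_def)
      then have "(fst p + t, snd p + t) \<in> ball p r" using sub by blast
      then have "(\<lambda>(a,b). c a b * t^a * t^b) summable_on UNIV"
        using hs has_sum_imp_summable by fastforce
      then have "(\<lambda>z. norm ((\<lambda>(a,b). c a b * t^a * t^b) z)) summable_on UNIV"
        using summable_on_iff_abs_summable_on_real by blast
      then show "(\<lambda>(a,b). \<bar>c a b\<bar> * t^a * t^b) summable_on UNIV"
        using t by (simp add: case_prod_unfold abs_mult)
    qed
  qed
qed

lemma laplacian_powser2:
  assumes c: "powser2_abs_conv c \<rho>" and u: "\<forall>z\<in>sq_ball p \<rho>. u z = powser2 c p z"
    and q: "q \<in> sq_ball p \<rho>"
  shows "laplacian u q = powser2 (coeff_dx (coeff_dx c)) p q + powser2 (coeff_dy (coeff_dy c)) p q"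
proof -
  have "\<forall>z\<in>sq_ball p \<rho>. pdx u z = powser2 (coeff_dx c) p z"
    using pdx_cong_open[OF open_sq_ball u] pdx_powser2[OF c] by simp
  then have "pdx (pdx u) q = powser2 (coeff_dx (coeff_dx c)) p q"
    using pdx_cong_open[OF open_sq_ball _ q] pdx_powser2[OF powser2_abs_conv_coeff_dx[OF c] q] by metis
  moreover have "\<forall>z\<in>sq_ball p \<rho>. pdy u z = powser2 (coeff_dy c) p z"
    using pdy_cong_open[OF open_sq_ball u] pdy_powser2[OF c] by simp
  then have "pdy (pdy u) q = powser2 (coeff_dy (coeff_dy c)) p q"
    using pdy_cong_open[OF open_sq_ball _ q] pdy_powser2[OF powser2_abs_conv_coeff_dy[OF c] q] by metis
  ultimately show ?thesis by (simp add: laplacian_def)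
qed

lemma helmholtz_coeff_recurrence:
  assumes "\<rho> > 0" and c: "powser2_abs_conv c \<rho>"
    and u: "\<forall>q\<in>sq_ball p \<rho>. u q = powser2 c p q"
    and pde: "\<forall>q\<in>sq_ball p \<rho>. - laplacian u q = lam * u q"
  shows "real ((a+1)*(a+2)) * c (a+2) b + real ((b+1)*(b+2)) * c a (b+2) + lam * c a b = 0"
proof -
  define L where "L = (\<lambda>a b. coeff_dx (coeff_dx c) a b + coeff_dy (coeff_dy c) a b + lam * c a b)"
  have conv_dxx: "powser2_abs_conv (coeff_dx (coeff_dx c)) \<rho>"
    using c by (intro powser2_abs_conv_coeff_dx)
  have conv_dyy: "powser2_abs_conv (coeff_dy (coeff_dy c)) \<rho>"
    using c by (intro powser2_abs_conv_coeff_dy)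
  have conv_L: "powser2_abs_conv L \<rho>"
    unfolding L_def by (intro powser2_abs_conv_add powser2_abs_conv_cmult conv_dxx conv_dyy c)
  have "powser2 L p q = powser2 (\<lambda>_ _. 0) p q" if q: "q \<in> sq_ball p \<rho>" for q
  proof -
    have "powser2 L p q = laplacian u q + lam * u q"
      unfolding L_def
      using powser2_add[OF powser2_abs_conv_add[OF conv_dxx conv_dyy] powser2_abs_conv_cmult[OF c] q]
        powser2_add[OF conv_dxx conv_dyy q] powser2_cmult laplacian_powser2[OF c u q] u q
      by simp
    also have "\<dots> = 0" using pde q by force
    finally show ?thesis by (simp add: powser2_def case_prod_unfold)
  qed
  moreover have "powser2_abs_conv (\<lambda>_ _. 0) \<rho>"
    by (simp add: powser2_abs_conv_def case_prod_unfold)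
  ultimately have "L a b = 0"
    using powser2_coeffs_unique[OF \<open>\<rho> > 0\<close> conv_L] by blast
  then show ?thesis by (simp add: L_def coeff_dx_def coeff_dy_def algebra_simps numeral_2_eq_2)
qed

definition coeff_dir :: "real \<times> real \<Rightarrow> (nat \<Rightarrow> nat \<Rightarrow> real) \<Rightarrow> nat \<Rightarrow> nat \<Rightarrow> real" where
  "coeff_dir n c a b = fst n * coeff_dx c a b + snd n * coeff_dy c a b"

lemma powser2_abs_conv_coeff_dir:
  "powser2_abs_conv c \<rho> \<Longrightarrow> powser2_abs_conv (coeff_dir n c) \<rho>"
  unfolding coeff_dir_def
  by (intro powser2_abs_conv_add powser2_abs_conv_cmult powser2_abs_conv_coeff_dx powser2_abs_conv_coeff_dy)

lemma deriv_line_powser2: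
  assumes c: "powser2_abs_conv c \<rho>" and u: "\<forall>z\<in>sq_ball p \<rho>. u z = powser2 c p z"
    and q: "q \<in> sq_ball p \<rho>"
  shows "deriv (\<lambda>s. u (q + s *\<^sub>R n)) 0 = powser2 (coeff_dir n c) p q"
proof -
  have "powser2 (coeff_dir n c) p q = fst n * powser2 (coeff_dx c) p q + snd n * powser2 (coeff_dy c) p q"
    unfolding coeff_dir_def
    using powser2_add[OF powser2_abs_conv_cmult powser2_abs_conv_cmult q] c powser2_cmult
      powser2_abs_conv_coeff_dx powser2_abs_conv_coeff_dy by simp
  then show ?thesis
    using deriv_line_cong_open[OF open_sq_ball u q] DERIV_imp_deriv[OF powser2_has_derivative_line[OF c q]]
    by simp
qed

section \<open>Restriction to rays\<close>

definition homogeneous_part :: "(nat \<Rightarrow> nat \<Rightarrow> real) \<Rightarrow> nat \<Rightarrow> real \<times> real \<Rightarrow> real" where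
  "homogeneous_part c n v = (\<Sum>k\<le>n. c (n - k) k * fst v^(n - k) * snd v^k)"

lemma bij_betw_antidiagonal: "bij_betw (\<lambda>(n::nat, k). (n - k, k)) (SIGMA n:UNIV. {..n}) UNIV"
proof -
  have "(a, b) \<in> (\<lambda>(n, k). (n - k, k)) ` (SIGMA n:UNIV. {..n})" for a b :: nat
    by (rule image_eqI[of _ _ "(a + b, b)"]) auto
  then show ?thesis unfolding bij_betw_def by (auto simp: inj_on_def)
qed

lemma powser2_ray_sums:
  assumes c: "powser2_abs_conv c \<rho>" and "norm v \<le> 1" "0 \<le> t" "t < \<rho>"
  shows "(\<lambda>n. homogeneous_part c n v * t^n) sums powser2 c p (p + t *\<^sub>R v)"
proof -
  define f where "f = (\<lambda>(a,b). c a b * (t * fst v)^a * (t * snd v)^b)"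
  have "(f has_sum powser2 c p (p + t *\<^sub>R v)) UNIV"
    using powser2_has_sum[OF c ray_in_sq_ball[OF assms(2-4)]] by (simp add: f_def)
  then have "((\<lambda>x. f ((\<lambda>(n, k). (n - k, k)) x)) has_sum powser2 c p (p + t *\<^sub>R v)) (SIGMA n:UNIV. {..n})"
    using has_sum_reindex_bij_betw[OF bij_betw_antidiagonal] by blast
  then have "((\<lambda>n. \<Sum>k\<le>n. f (n - k, k)) has_sum powser2 c p (p + t *\<^sub>R v)) UNIV"
    by (rule has_sum_Sigma') auto
  moreover have "(\<Sum>k\<le>n. f (n - k, k)) = homogeneous_part c n v * t^n" for n
    unfolding homogeneous_part_def sum_distrib_right
  proof (rule sum.cong)
    fix k assume "k \<in> {..n}"
    then have "t^n = t^(n - k) * t^k" by (simp flip: power_add)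
    then show "f (n - k, k) = c (n - k) k * fst v^(n - k) * snd v^k * t^n"
      by (simp add: f_def power_mult_distrib)
  qed simp
  ultimately show ?thesis by (simp add: has_sum_imp_sums)
qed

lemma powser_vanishing_lowest_coeff:
  fixes G :: "nat \<Rightarrow> real"
  assumes "\<delta> > 0" and sums: "\<And>t. 0 < t \<Longrightarrow> t < \<delta> \<Longrightarrow> (\<lambda>n. G n * t^n) sums 0"
    and low: "\<And>n. n < K \<Longrightarrow> G n = 0"
  shows "G K = 0"
proof -
  define H where "H m = G (m + K)" for m
  have H_sums: "(\<lambda>m. H m * t^m) sums 0" if "0 < t" "t < \<delta>" for t
  proof -
    from sums_split_initial_segment[OF sums[OF that], of K]
    have "(\<lambda>m. G (m + K) * t^(m + K)) sums 0" using low by simp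
    from sums_divide[OF this, of "t^K"] show ?thesis using that by (simp add: H_def power_add)
  qed
  have "summable (\<lambda>m. H m * (\<delta>/2)^m)" using H_sums[of "\<delta>/2"] \<open>\<delta> > 0\<close> by (simp add: sums_iff)
  then have "isCont (\<lambda>t. \<Sum>m. H m * t^m) 0" by (rule isCont_powser) (use \<open>\<delta> > 0\<close> in simp)
  then have "((\<lambda>t. \<Sum>m. H m * t^m) \<longlongrightarrow> H 0) (at_right 0)"
    by (simp add: isCont_def filterlim_at_split)
  moreover have "\<forall>\<^sub>F t in at_right 0. (\<Sum>m. H m * t^m) = 0"
    unfolding eventually_at_right_field
    using \<open>\<delta> > 0\<close> H_sums by (intro exI[of _ \<delta>]) (auto simp: sums_iff)
  then have "((\<lambda>t. \<Sum>m. H m * t^m) \<longlongrightarrow> 0) (at_right 0)" by (rule tendsto_eventually)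
  ultimately have "H 0 = 0" by (rule tendsto_unique[rotated]) simp
  then show ?thesis by (simp add: H_def)
qed

lemma homogeneous_part_lowest_eq_0:
  assumes c: "powser2_abs_conv c \<rho>" and "\<rho> > 0" and low: "\<forall>a b. a + b < K \<longrightarrow> c a b = 0"
    and v: "norm v \<le> 1" and "\<delta> > 0"
    and zero: "\<forall>t. 0 < t \<and> t < \<delta> \<longrightarrow> powser2 c p (p + t *\<^sub>R v) = 0"
  shows "homogeneous_part c K v = 0"
proof (rule powser_vanishing_lowest_coeff)
  show "min \<delta> \<rho> > 0" using \<open>\<delta> > 0\<close> \<open>\<rho> > 0\<close> by simp
  show "(\<lambda>n. homogeneous_part c n v * t^n) sums 0" if "0 < t" "t < min \<delta> \<rho>" for t
    using powser2_ray_sums[OF c v, of t p] zero that by simp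
  show "homogeneous_part c n v = 0" if "n < K" for n
    using low that by (simp add: homogeneous_part_def)
qed

section \<open>Harmonic homogeneous polynomials\<close>

lemma Re_mult_of_real: "Re (z * complex_of_real r) = Re z * r"
  by simp

lemma homogeneous_part_eq_Re:
  assumes "\<And>k. k \<le> N \<Longrightarrow> c (N - k) k = Re (\<zeta> * of_nat (N choose k) * \<i>^k)"
  shows "homogeneous_part c N (x, y) = Re (\<zeta> * Complex x y ^ N)"
proof -
  have "Complex x y = \<i> * of_real y + of_real x" by (simp add: complex_eq_iff)
  then have "Complex x y ^ N = (\<Sum>k\<le>N. of_nat (N choose k) * (\<i> * of_real y)^k * of_real x^(N - k))"
    by (simp add: binomial_ring)
  then have "\<zeta> * Complex x y ^ N
      = (\<Sum>k\<le>N. \<zeta> * of_nat (N choose k) * \<i>^k * complex_of_real (x^(N - k) * y^k))"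
    by (simp add: sum_distrib_left power_mult_distrib mult_ac)
  then have "Re (\<zeta> * Complex x y ^ N)
      = (\<Sum>k\<le>N. Re (\<zeta> * of_nat (N choose k) * \<i>^k) * (x^(N - k) * y^k))"
    by (simp only: Re_sum Re_mult_of_real)
  also have "\<dots> = homogeneous_part c N (x, y)"
    unfolding homogeneous_part_def using assms by (intro sum.cong) (simp_all add: mult.assoc)
  finally show ?thesis by simp
qed

lemma binomial_two_step:
  assumes "j + 2 \<le> N"
  shows "(j+1)*(j+2)*(N choose (j+2)) = (N-j)*(N-j-1)*(N choose j)"
proof -
  have h1: "Suc (Suc j) * (N choose Suc (Suc j)) = N * ((N-1) choose Suc j)" by (rule binomial_absorption)
  have h2: "Suc j * ((N-1) choose Suc j) = (N-1) * ((N-1-1) choose j)" by (rule binomial_absorption)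
  have h3: "(N-j) * (N choose j) = N * ((N-1) choose j)" by (rule binomial_absorb_comp)
  have h4: "(N-1-j) * ((N-1) choose j) = (N-1) * ((N-1-1) choose j)" by (rule binomial_absorb_comp)
  have "(j+1)*(j+2)*(N choose (j+2)) = (j+1) * (Suc (Suc j) * (N choose Suc (Suc j)))"
    by (simp only: mult.assoc add_2_eq_Suc')
  also have "\<dots> = N * (Suc j * ((N-1) choose Suc j))" unfolding h1 by (simp add: algebra_simps)
  also have "\<dots> = N * ((N-1-j) * ((N-1) choose j))" unfolding h2 h4 ..
  also have "\<dots> = (N-1-j) * ((N-j) * (N choose j))" unfolding h3 by simp
  also have "\<dots> = (N-j)*(N-j-1)*(N choose j)" by (metis diff_commute mult.commute mult.assoc)
  finally show ?thesis .
qed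

(* The coefficients of  zeta (x + i y)^N  satisfy the same two-step recurrence and agree with
   those of c in the first two positions. *)
lemma harmonic_homogeneous_coeffs:
  assumes rec: "\<forall>k. k + 2 \<le> N \<longrightarrow>
      real ((N-k)*(N-k-1)) * c (N-k) k + real ((k+1)*(k+2)) * c (N-k-2) (k+2) = 0"
    and "k \<le> N"
  shows "c (N - k) k = Re ((c N 0 - \<i> * (c (N-1) 1 / real N)) * of_nat (N choose k) * \<i>^k)"
  using \<open>k \<le> N\<close>
proof (induction k rule: less_induct)
  case (less k)
  define \<zeta> where "\<zeta> = c N 0 - \<i> * (c (N-1) 1 / real N)"
  show ?case
  proof (cases "k < 2")
    case True
    then consider "k = 0" | "k = 1" by linarith
    then show ?thesis
    proof cases
      case 2
      then have "N \<noteq> 0" using less.prems by simp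
      then show ?thesis using 2 by simp
    qed simp
  next
    case False
    define j where "j = k - 2"
    have k: "k = j + 2" and j: "j + 2 \<le> N" using False less.prems by (auto simp: j_def)
    define R where "R = Re (\<zeta> * \<i>^j)"
    have "real ((j+1)*(j+2)) * Re (\<zeta> * of_nat (N choose (j+2)) * \<i>^(j+2))
        = - (real ((j+1)*(j+2)) * real (N choose (j+2)) * R)"
      by (simp add: R_def power_add algebra_simps)
    also have "\<dots> = - (real ((N-j)*(N-j-1)) * real (N choose j) * R)"
      using binomial_two_step[OF j] by (metis of_nat_mult)
    also have "\<dots> = - (real ((N-j)*(N-j-1)) * Re (\<zeta> * of_nat (N choose j) * \<i>^j))"
      by (simp add: R_def algebra_simps)
    finally have Re_rec: "real ((j+1)*(j+2)) * Re (\<zeta> * of_nat (N choose (j+2)) * \<i>^(j+2))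
        = - (real ((N-j)*(N-j-1)) * Re (\<zeta> * of_nat (N choose j) * \<i>^j))" .
    have IH: "c (N-j) j = Re (\<zeta> * of_nat (N choose j) * \<i>^j)"
      using less.IH[of j] k j by (simp add: \<zeta>_def)
    have "real ((N-j)*(N-j-1)) * c (N-j) j + real ((j+1)*(j+2)) * c (N-j-2) (j+2) = 0"
      using rec j by blast
    then have "real ((j+1)*(j+2)) * c (N-j-2) (j+2)
        = real ((j+1)*(j+2)) * Re (\<zeta> * of_nat (N choose (j+2)) * \<i>^(j+2))"
      using Re_rec unfolding IH by linarith
    then have "c (N-j-2) (j+2) = Re (\<zeta> * of_nat (N choose (j+2)) * \<i>^(j+2))"
      by (rule mult_left_cancel[THEN iffD1, rotated]) (simp only: of_nat_eq_0_iff mult_eq_0_iff; simp)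
    then show ?thesis using k by (simp only: \<zeta>_def diff_diff_add)
  qed
qed

lemma coeff_dir_harmonic_homogeneous:
  assumes c: "\<And>k. k \<le> N \<Longrightarrow> c (N - k) k = Re (\<zeta> * of_nat (N choose k) * \<i>^k)"
    and k: "k \<le> N - 1" and "N \<ge> 1"
  shows "coeff_dir (n1, n2) c (N - 1 - k) k
           = Re (\<zeta> * of_nat N * Complex n1 n2 * of_nat ((N - 1) choose k) * \<i>^k)"
proof -
  have idx: "N - 1 - k + 1 = N - k" using k \<open>N \<ge> 1\<close> by auto
  have "coeff_dir (n1, n2) c (N - 1 - k) k
      = n1 * real (N - k) * c (N - k) k + n2 * real (Suc k) * c (N - Suc k) (Suc k)"
    by (simp only: coeff_dir_def coeff_dx_def coeff_dy_def idx) (simp add: mult.assoc)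
  also have "\<dots> = n1 * Re (\<zeta> * of_nat ((N - k) * (N choose k)) * \<i>^k)
                  + n2 * Re (\<zeta> * of_nat (Suc k * (N choose Suc k)) * \<i>^Suc k)"
  proof -
    have ck: "c (N - k) k = Re (\<zeta> * of_nat (N choose k) * \<i>^k)" using c k by simp
    have ck1: "c (N - Suc k) (Suc k) = Re (\<zeta> * of_nat (N choose Suc k) * \<i>^Suc k)"
      using c[of "Suc k"] k \<open>N \<ge> 1\<close> by simp
    have "real (N - k) = real N - real k" using k \<open>N \<ge> 1\<close> by simp
    then show ?thesis by (simp only: ck ck1) (simp add: algebra_simps)
  qed
  also have "\<dots> = n1 * Re (\<zeta> * of_nat (N * ((N - 1) choose k)) * \<i>^k)
                  + n2 * Re (\<zeta> * of_nat (N * ((N - 1) choose k)) * \<i>^Suc k)"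
    by (simp only: binomial_absorb_comp binomial_absorption)
  also have "\<dots> = Re (\<zeta> * of_nat N * Complex n1 n2 * of_nat ((N - 1) choose k) * \<i>^k)"
    by (simp add: Complex_eq algebra_simps)
  finally show ?thesis .
qed

lemma cos_mult_irrational_pi_neq_0:
  assumes N: "N \<ge> 1" and irr: "\<alpha> \<notin> \<rat>"
  shows "cos (real N * \<alpha> * pi) \<noteq> 0"
proof
  assume "cos (real N * \<alpha> * pi) = 0"
  then obtain n :: nat where "real N * \<alpha> * pi = real n * (pi/2) \<or> real N * \<alpha> * pi = - (real n * (pi/2))"
    unfolding cos_zero_iff by blast
  hence "(real N * \<alpha>) * pi = (real n / 2) * pi \<or> (real N * \<alpha>) * pi = (- (real n / 2)) * pi"
    by (auto simp: algebra_simps)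
  hence h: "real N * \<alpha> = real n / 2 \<or> real N * \<alpha> = - (real n / 2)"
    by (metis mult_right_cancel pi_neq_zero)
  have Npos: "real N > 0" using N by simp
  have "\<alpha> = (real N * \<alpha>) / real N" using Npos by simp
  hence "\<alpha> = (real n / 2) / real N \<or> \<alpha> = (- (real n / 2)) / real N" using h by metis
  hence "\<alpha> \<in> \<rat>" by (auto intro!: Rats_divide simp: Rats_minus_iff)
  with irr show False by simp
qed

lemma Re_cis_pair_eq_0:
  assumes "Re (\<zeta> * cis (\<phi> + \<beta>)) = 0" "Re (\<zeta> * \<i> * cis \<phi>) = 0" "cos \<beta> \<noteq> 0"
  shows "\<zeta> = 0"
proof -
  define w where "w = \<zeta> * cis \<phi>"
  have "\<zeta> * \<i> * cis \<phi> = \<i> * w" by (simp add: w_def mult_ac)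
  then have "Re (\<i> * w) = 0" using assms(2) by metis
  then have "Im w = 0" by simp
  have "\<zeta> * cis (\<phi> + \<beta>) = w * cis \<beta>" by (simp add: w_def mult.assoc cis_mult)
  then have "Re w * cos \<beta> = 0" using assms(1) \<open>Im w = 0\<close> by simp
  with \<open>Im w = 0\<close> have "w = 0" using assms(3) by (simp add: complex_eq_iff)
  then show ?thesis by (simp add: w_def)
qed

lemma harmonic_homogeneous_eq_0:
  assumes rec: "\<forall>k. k + 2 \<le> N \<longrightarrow>
      real ((N-k)*(N-k-1)) * c (N-k) k + real ((k+1)*(k+2)) * c (N-k-2) (k+2) = 0"
    and "N \<ge> 1" "\<alpha> \<notin> \<rat>"
    and nodal: "homogeneous_part c N (cos (\<theta> + \<alpha> * pi), sin (\<theta> + \<alpha> * pi)) = 0"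
    and normal: "homogeneous_part (coeff_dir (- sin \<theta>, cos \<theta>) c) (N - 1) (cos \<theta>, sin \<theta>) = 0"
    and "k \<le> N"
  shows "c (N - k) k = 0"
proof -
  define \<zeta> where "\<zeta> = c N 0 - \<i> * (c (N-1) 1 / real N)"
  have c: "c (N - k) k = Re (\<zeta> * of_nat (N choose k) * \<i>^k)" if "k \<le> N" for k
    unfolding \<zeta>_def using harmonic_homogeneous_coeffs[OF rec that] .
  have "Re (\<zeta> * cis (\<theta> + \<alpha> * pi) ^ N) = 0"
    using nodal homogeneous_part_eq_Re[where c = c and N = N, OF c] by (simp only: cis.ctr)
  then have "Re (\<zeta> * cis (real N * \<theta> + real N * \<alpha> * pi)) = 0"
    by (simp add: Complex.DeMoivre distrib_left mult.assoc)
  moreover have "Re (\<zeta> * \<i> * cis (real N * \<theta>)) = 0"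
  proof -
    have "Complex (- sin \<theta>) (cos \<theta>) = \<i> * cis \<theta>" by (simp add: complex_eq_iff)
    moreover have "cis \<theta> * cis (real (N - 1) * \<theta>) = cis (real N * \<theta>)"
      using \<open>N \<ge> 1\<close> by (simp add: cis_mult of_nat_diff algebra_simps)
    ultimately have rotate: "Complex (- sin \<theta>) (cos \<theta>) * cis (real (N - 1) * \<theta>) = \<i> * cis (real N * \<theta>)"
      by (simp add: mult.assoc)
    have "homogeneous_part (coeff_dir (- sin \<theta>, cos \<theta>) c) (N - 1) (cos \<theta>, sin \<theta>)
        = Re (\<zeta> * of_nat N * Complex (- sin \<theta>) (cos \<theta>) * Complex (cos \<theta>) (sin \<theta>) ^ (N - 1))"
      by (rule homogeneous_part_eq_Re, rule coeff_dir_harmonic_homogeneous)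
        (use c \<open>N \<ge> 1\<close> in auto)
    with normal rotate have "Re (\<zeta> * (of_nat N * (\<i> * cis (real N * \<theta>)))) = 0"
      by (simp only: cis.ctr[symmetric] Complex.DeMoivre mult.assoc)
    moreover have "Re (\<zeta> * (of_nat N * (\<i> * cis (real N * \<theta>))))
        = real N * Re (\<zeta> * \<i> * cis (real N * \<theta>))"
      by (simp add: algebra_simps)
    ultimately show ?thesis using \<open>N \<ge> 1\<close> by simp
  qed
  ultimately have "\<zeta> = 0"
    using Re_cis_pair_eq_0 cos_mult_irrational_pi_neq_0[OF \<open>N \<ge> 1\<close> \<open>\<alpha> \<notin> \<rat>\<close>] \<open>N \<ge> 1\<close> by auto
  then show ?thesis using c \<open>k \<le> N\<close> by simp
qed

section \<open>Nodal and singular rays\<close>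

lemma unit_vector_eq_cos_sin:
  fixes v :: "real \<times> real"
  assumes "norm v = 1"
  obtains \<theta> where "v = (cos \<theta>, sin \<theta>)"
proof -
  have "(fst v)^2 + (snd v)^2 = 1"
    using assms by (cases v) (simp add: norm_Pair)
  then obtain \<theta> where "fst v = cos \<theta>" "snd v = sin \<theta>" using sincos_total_2pi by metis
  then show ?thesis by (intro that[of \<theta>]) (simp add: prod_eq_iff)
qed

lemma helmholtz_powser2_coeffs_eq_0:
  assumes c: "powser2_abs_conv c \<rho>" and "\<rho> > 0"
    and rec: "\<And>a b. real ((a+1)*(a+2)) * c (a+2) b + real ((b+1)*(b+2)) * c a (b+2) + lam * c a b = 0"
    and "\<delta> > 0" and irr: "\<alpha> \<notin> \<rat>"
    and nodal: "\<forall>t. 0 < t \<and> t < \<delta> \<longrightarrow>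
                  powser2 c p (p + t *\<^sub>R (cos (\<theta> + \<alpha> * pi), sin (\<theta> + \<alpha> * pi))) = 0"
    and singular: "\<forall>t. 0 < t \<and> t < \<delta> \<longrightarrow>
                  powser2 (coeff_dir (- sin \<theta>, cos \<theta>) c) p (p + t *\<^sub>R (cos \<theta>, sin \<theta>)) = 0"
  shows "c a b = 0"
proof (induction "a + b" arbitrary: a b rule: less_induct)
  case less
  define N where "N = a + b"
  have low: "\<forall>a' b'. a' + b' < N \<longrightarrow> c a' b' = 0" using less by (simp add: N_def)
  have hp_nodal: "homogeneous_part c N (cos (\<theta> + \<alpha> * pi), sin (\<theta> + \<alpha> * pi)) = 0"
    using \<open>\<delta> > 0\<close> by (intro homogeneous_part_lowest_eq_0[OF c \<open>\<rho> > 0\<close> low _ _ nodal]) (simp_all add: norm_Pair)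
  show ?case
  proof (cases "N = 0")
    case True
    then show ?thesis using hp_nodal by (simp add: homogeneous_part_def N_def)
  next
    case False
    have "\<forall>a' b'. a' + b' < N - 1 \<longrightarrow> coeff_dir (- sin \<theta>, cos \<theta>) c a' b' = 0"
      using low by (auto simp: coeff_dir_def coeff_dx_def coeff_dy_def)
    then have hp_normal: "homogeneous_part (coeff_dir (- sin \<theta>, cos \<theta>) c) (N - 1) (cos \<theta>, sin \<theta>) = 0"
      using \<open>\<delta> > 0\<close> powser2_abs_conv_coeff_dir[OF c]
      by (intro homogeneous_part_lowest_eq_0[OF _ \<open>\<rho> > 0\<close> _ _ _ singular]) (simp_all add: norm_Pair)
    have "real ((N-k)*(N-k-1)) * c (N-k) k + real ((k+1)*(k+2)) * c (N-k-2) (k+2) = 0"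
      if "k + 2 \<le> N" for k
    proof -
      define i where "i = N - k - 2"
      have i: "N - k = i + 2" "N - k - 1 = i + 1" "N - k - 2 = i" using that by (auto simp: i_def)
      have "c i k = 0" using low i that by simp
      then show ?thesis using rec[of i k] i by (simp add: mult.commute)
    qed
    then have "c (N - b) b = 0"
      using False by (intro harmonic_homogeneous_eq_0[OF _ _ irr hp_nodal hp_normal]) (auto simp: N_def)
    then show ?thesis by (simp add: N_def)
  qed
qed

theorem theorem4p4:
  fixes \<Omega> :: "(real \<times> real) set" and u :: "real \<times> real \<Rightarrow> real"
    and lam h \<alpha> :: real and x0 em ep :: "real \<times> real"
  assumes "open \<Omega>"
    and "lam > 0"
    and "real_analytic_on2 u \<Omega>"
    and "(\<lambda>x. (u x)\<^sup>2) integrable_on \<Omega>"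
    and "\<forall>x\<in>\<Omega>. - laplacian u x = lam * u x"
    and "x0 \<in> \<Omega>" and "h > 0"
    and "norm em = 1" and "norm ep = 1"
    and "0 < \<alpha>" and "\<alpha> < 2" and "\<alpha> \<notin> \<rat>"
    and "ep = rot (\<alpha> * pi) em"
    and "segment_from x0 em h \<subseteq> \<Omega>" and "segment_from x0 ep h \<subseteq> \<Omega>"
    and "\<forall>x\<in>segment_from x0 em h. deriv (\<lambda>s. u (x + s *\<^sub>R rot (pi/2) em)) 0 = 0"
    and "\<forall>x\<in>segment_from x0 ep h. u x = 0"
  shows "Vani u x0 = \<infinity>"
proof -
  obtain \<rho> c where "\<rho> > 0" and c: "powser2_abs_conv c \<rho>" and "sq_ball x0 \<rho> \<subseteq> \<Omega>"
    and u: "\<forall>q\<in>sq_ball x0 \<rho>. u q = powser2 c x0 q"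
    using real_analytic_on2_local_powser2 assms(3,1,6) by blast
  obtain \<theta> where em: "em = (cos \<theta>, sin \<theta>)" using unit_vector_eq_cos_sin assms(8) by blast
  have ep: "ep = (cos (\<theta> + \<alpha> * pi), sin (\<theta> + \<alpha> * pi))"
    using assms(13) by (simp add: em rot_def cos_add sin_add algebra_simps)
  define \<delta> where "\<delta> = min h \<rho>"
  have on_ray: "x0 + t *\<^sub>R v \<in> sq_ball x0 \<rho> \<inter> segment_from x0 v h" if "0 < t \<and> t < \<delta>" "norm v = 1" for t v
    using that ray_in_sq_ball[of v t \<rho> x0] by (auto simp: \<delta>_def segment_from_def)
  have "\<forall>t. 0 < t \<and> t < \<delta> \<longrightarrow> powser2 c x0 (x0 + t *\<^sub>R ep) = 0"
    using on_ray[OF _ assms(9)] u assms(17) by fastforce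
  moreover have "\<forall>t. 0 < t \<and> t < \<delta> \<longrightarrow> powser2 (coeff_dir (rot (pi/2) em) c) x0 (x0 + t *\<^sub>R em) = 0"
    using on_ray[OF _ assms(8)] deriv_line_powser2[OF c u, where n = "rot (pi/2) em"] assms(16)
    by (metis IntD1 IntD2)
  moreover have "real ((a+1)*(a+2)) * c (a+2) b + real ((b+1)*(b+2)) * c a (b+2) + lam * c a b = 0" for a b
    using helmholtz_coeff_recurrence[OF \<open>\<rho> > 0\<close> c u] assms(5) \<open>sq_ball x0 \<rho> \<subseteq> \<Omega>\<close> by blast
  ultimately have "c a b = 0" for a b
    using \<open>\<rho> > 0\<close> assms(7,12)
    by (intro helmholtz_powser2_coeffs_eq_0[OF c, where lam = lam and \<delta> = \<delta> and \<alpha> = \<alpha> and p = x0 and \<theta> = \<theta>])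
       (simp_all add: \<delta>_def ep em rot_def)
  then show ?thesis using Vani_powser2_zero[OF \<open>\<rho> > 0\<close> c u] by blast
qed

end
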